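(* Let $\mathcal C\subseteq2^{[n]}$ be a code. If the polar complex $\Gamma(\mathcal C)$ is shellable, then either $\mathcal C=2^{[n]}$ or $\Gamma(\mathcal C)$ is collapsible.
   Context: The polar complex $\Gamma(\mathcal C)$ is the simplicial complex on $[n]\sqcup\{\bar1,\dots,\bar n\}$ consisting of all subsets of the sets $\sigma\sqcup\{\bar i:i\in[n]\setminus\sigma\}$, $\sigma\in\mathcal C$; it is pure of dimension $n-1$. A pure $k$-dimensional complex is shellable if its facets admit an ordering $F_1,\dots,F_t$ such that for each $i>1$, the complex of all subsets of $F_i$ intersected with the complex of all subsets of $F_1,\dots,F_{i-1}$ is pure of dimension $k-1$. A free pair in a complex $\Delta$ is $(\sigma,\tau)$ with $\tau$ a facet, $\sigma\subsetneq\tau$, and $\sigma$ contained in no other facet; collapsing along $\sigma$ replaces $\Delta$ by $\{\nu\in\Delta:\nu\not\supseteq\sigma\}$; $\Delta$ is collapsible if a finite sequence of collapses yields the void complex $\{\}$ (with no faces), so $\{\}$ is collapsible and $\{\emptyset\}$ is not. *)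

theory Defs
  imports Main
begin

text \<open>Vertices of the polar complex: Inl i stands for i, Inr i for the barred vertex bar-i.
  A simplicial complex is represented by its set of faces.\<close>

definition polar_facet :: "nat \<Rightarrow> nat set \<Rightarrow> (nat + nat) set" where
  "polar_facet n \<sigma> = Inl ` \<sigma> \<union> Inr ` ({1..n} - \<sigma>)"

definition polar_complex :: "nat \<Rightarrow> nat set set \<Rightarrow> (nat + nat) set set" where
  "polar_complex n C = {\<nu>. \<exists>\<sigma>\<in>C. \<nu> \<subseteq> polar_facet n \<sigma>}"

definition facets :: "'a set set \<Rightarrow> 'a set set" where
  "facets K = {F \<in> K. \<forall>G\<in>K. F \<subseteq> G \<longrightarrow> G = F}"

text \<open>Shellability of a pure complex whose facets have d elements (dimension d-1):
  the intersection of each later facet's simplex with the earlier ones must be pure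
  of dimension d-2, i.e. all its facets have d-1 elements.\<close>

definition shellable :: "'a set set \<Rightarrow> bool" where
  "shellable \<Delta> \<longleftrightarrow> (\<exists>d::nat. (\<forall>F\<in>facets \<Delta>. finite F \<and> card F = d) \<and>
     (\<exists>Fs. distinct Fs \<and> set Fs = facets \<Delta> \<and>
        (\<forall>i. 0 < i \<and> i < length Fs \<longrightarrow>
           (\<forall>G\<in>facets (Pow (Fs ! i) \<inter> (\<Union>j<i. Pow (Fs ! j))). card G + 1 = d))))"

definition free_pair :: "'a set set \<Rightarrow> 'a set \<Rightarrow> 'a set \<Rightarrow> bool" where
  "free_pair \<Delta> \<sigma> \<tau> \<longleftrightarrow> \<tau> \<in> facets \<Delta> \<and> \<sigma> \<subset> \<tau> \<and>
     (\<forall>\<tau>'\<in>facets \<Delta>. \<sigma> \<subseteq> \<tau>' \<longrightarrow> \<tau>' = \<tau>)"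

definition collapse :: "'a set set \<Rightarrow> 'a set \<Rightarrow> 'a set set" where
  "collapse \<Delta> \<sigma> = {\<nu> \<in> \<Delta>. \<not> \<sigma> \<subseteq> \<nu>}"

inductive collapsible :: "'a set set \<Rightarrow> bool" where
  void: "collapsible {}"
| step: "free_pair \<Delta> \<sigma> \<tau> \<Longrightarrow> collapsible (collapse \<Delta> \<sigma>) \<Longrightarrow> collapsible \<Delta>"

end

theory Submission
  imports Defs
begin

text \<open>
  Let \<open>F\<^sub>1, \<dots>, F\<^sub>t\<close> be a shelling of a pure complex and \<open>R(F\<^sub>j)\<close> its restriction faces.
  If no facet is a homology facet (\<open>R(F\<^sub>j) = F\<^sub>j\<close>), removing the free faces \<open>R(F\<^sub>t), \<dots>, R(F\<^sub>1)\<close>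
  in turn collapses the complex. If \<open>F\<^sub>m\<close> is a homology facet, its boundary is a mod-2 cycle
  in the complex spanned by the earlier facets, and in a shelling every such cycle bounds;
  hence \<open>F\<^sub>m\<close> lies in a nonempty set of facets every ridge of which lies in an even number
  of them. In the polar complex a ridge \<open>\<Gamma>(\<sigma>) - {v}\<close> lies in at most one further facet,
  namely the one of \<open>\<sigma>\<close> with the membership of the vertex index flipped. So such a set of
  facets is closed under flipping single indices, and therefore contains all of \<open>2\<^bsup>[n]\<^esup>\<close>.
\<close>

subsection \<open>Mod-2 chains\<close>

definition ridges :: "'a set \<Rightarrow> 'a set set" where
  "ridges F = (\<lambda>u. F - {u}) ` F"

text \<open>Chains with coefficients in \<open>\<int>/2\<close> are sets of faces; \<open>mod2_boundary d c\<close> is the boundary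
  of a chain of \<open>d\<close>-element faces, \<open>mod2_cycle d z\<close> says that a chain of \<open>(d-1)\<close>-element faces
  has zero boundary.\<close>

definition mod2_boundary :: "nat \<Rightarrow> 'a set set \<Rightarrow> 'a set set" where
  "mod2_boundary d c = {r. finite r \<and> card r + 1 = d \<and> odd (card {F\<in>c. r \<subseteq> F})}"

definition mod2_cycle :: "nat \<Rightarrow> 'a set set \<Rightarrow> bool" where
  "mod2_cycle d z \<longleftrightarrow> (\<forall>t. finite t \<and> card t + 2 = d \<longrightarrow> even (card {r\<in>z. t \<subseteq> r}))"

lemma even_card_sym_diff_iff:
  assumes "finite A" "finite B"
  shows "even (card (sym_diff A B)) \<longleftrightarrow> even (card A + card B)"
proof -
  have "card A = card (A \<inter> B) + card (A - B)" "card B = card (A \<inter> B) + card (B - A)"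
    using assms card_Int_Diff[of A B] card_Int_Diff[of B A] by (simp_all add: Int_commute)
  moreover have "card (sym_diff A B) = card (A - B) + card (B - A)"
    using assms by (intro card_Un_disjoint) auto
  ultimately show ?thesis by presburger
qed

lemma mod2_cycle_sym_diff:
  assumes "finite A" "finite B" "mod2_cycle d A" "mod2_cycle d B"
  shows "mod2_cycle d (sym_diff A B)"
  unfolding mod2_cycle_def
proof (intro allI impI)
  fix t :: "'a set"
  assume t: "finite t \<and> card t + 2 = d"
  let ?A = "{r\<in>A. t \<subseteq> r}" and ?B = "{r\<in>B. t \<subseteq> r}"
  have "{r \<in> sym_diff A B. t \<subseteq> r} = sym_diff ?A ?B" by auto
  moreover have "even (card ?A)" "even (card ?B)"
    using assms(3,4) t unfolding mod2_cycle_def by auto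
  ultimately show "even (card {r \<in> sym_diff A B. t \<subseteq> r})"
    using even_card_sym_diff_iff[of ?A ?B] assms(1,2) by auto
qed

lemma finite_ridges: "finite F \<Longrightarrow> finite (ridges F)"
  by (simp add: ridges_def)

lemma mem_ridges_iff:
  assumes "finite F"
  shows "r \<in> ridges F \<longleftrightarrow> r \<subseteq> F \<and> card r + 1 = card F"
proof
  assume "r \<in> ridges F"
  then obtain u where "u \<in> F" "r = F - {u}" by (auto simp: ridges_def)
  then show "r \<subseteq> F \<and> card r + 1 = card F"
    using assms by (metis Diff_subset card_Diff_singleton card.remove add.commute plus_1_eq_Suc)
next
  assume r: "r \<subseteq> F \<and> card r + 1 = card F"
  then have "finite r" using assms finite_subset by blast
  then have "card (F - r) = 1" using assms r by (auto simp: card_Diff_subset)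
  then obtain u where "F - r = {u}" by (meson card_1_singletonE)
  then have "u \<in> F" "r = F - {u}" using r by auto
  then show "r \<in> ridges F" by (auto simp: ridges_def)
qed

lemma mod2_cycle_ridges:
  assumes "finite F" "card F = d"
  shows "mod2_cycle d (ridges F)"
  unfolding mod2_cycle_def
proof (intro allI impI)
  fix t :: "'a set"
  assume t: "finite t \<and> card t + 2 = d"
  show "even (card {r\<in>ridges F. t \<subseteq> r})"
  proof (cases "t \<subseteq> F")
    case True
    have "{r\<in>ridges F. t \<subseteq> r} = (\<lambda>u. F - {u}) ` (F - t)"
      using True by (auto simp: ridges_def)
    moreover have "inj_on (\<lambda>u. F - {u}) (F - t)"
      by (auto simp: inj_on_def)
    moreover have "card (F - t) = 2"
      using True t assms by (auto simp: card_Diff_subset)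
    ultimately show ?thesis by (simp add: card_image)
  next
    case False
    then have "{r\<in>ridges F. t \<subseteq> r} = {}" by (auto simp: ridges_def)
    then show ?thesis by (metis card.empty even_zero)
  qed
qed

lemma mod2_boundary_insert:
  assumes "finite c" "F \<notin> c" "finite F" "card F = d"
  shows "mod2_boundary d (insert F c) = sym_diff (mod2_boundary d c) (ridges F)"
proof (rule set_eqI)
  fix r
  have "card {G\<in>insert F c. r \<subseteq> G} = card {G\<in>c. r \<subseteq> G} + (if r \<subseteq> F then 1 else 0)"
  proof (cases "r \<subseteq> F")
    case True
    then have "{G\<in>insert F c. r \<subseteq> G} = insert F {G\<in>c. r \<subseteq> G}" by auto
    then show ?thesis using True assms(1,2) by simp
  next
    case False
    then have "{G\<in>insert F c. r \<subseteq> G} = {G\<in>c. r \<subseteq> G}" by auto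
    then show ?thesis using False by simp
  qed
  then show "r \<in> mod2_boundary d (insert F c) \<longleftrightarrow> r \<in> sym_diff (mod2_boundary d c) (ridges F)"
    using mem_ridges_iff[OF assms(3), of r] assms(3,4)
    by (auto simp: mod2_boundary_def intro: finite_subset)
qed

subsection \<open>Shellings\<close>

locale pure_shelling =
  fixes Fs :: "'a set list" and d :: nat
  assumes distinct_facets: "distinct Fs"
    and finite_facet: "F \<in> set Fs \<Longrightarrow> finite F"
    and card_facet: "F \<in> set Fs \<Longrightarrow> card F = d"
    and shelling_condition: "\<lbrakk>0 < i; i < length Fs;
      G \<in> facets (Pow (Fs ! i) \<inter> (\<Union>j<i. Pow (Fs ! j)))\<rbrakk> \<Longrightarrow> card G + 1 = d"
begin

definition prefix_complex :: "nat \<Rightarrow> 'a set set" where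
  "prefix_complex j = (\<Union>l<j. Pow (Fs ! l))"

text \<open>\<open>restriction j\<close> is the restriction face \<open>R(F\<^sub>j)\<close> of the shelling (facets indexed from 0).\<close>

definition restriction :: "nat \<Rightarrow> 'a set" where
  "restriction j = {v \<in> Fs ! j. Fs ! j - {v} \<in> prefix_complex j}"

lemma prefix_complex_0 [simp]: "prefix_complex 0 = {}"
  by (simp add: prefix_complex_def)

lemma prefix_complex_Suc: "prefix_complex (Suc j) = prefix_complex j \<union> Pow (Fs ! j)"
  by (auto simp: prefix_complex_def lessThan_Suc)

lemma mem_prefix_complex_iff: "\<nu> \<in> prefix_complex j \<longleftrightarrow> (\<exists>l<j. \<nu> \<subseteq> Fs ! l)"
  by (auto simp: prefix_complex_def)

lemma prefix_complex_downward_closed: "\<nu> \<in> prefix_complex j \<Longrightarrow> \<mu> \<subseteq> \<nu> \<Longrightarrow> \<mu> \<in> prefix_complex j"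
  by (auto simp: prefix_complex_def)

lemma prefix_complex_length: "prefix_complex (length Fs) = (\<Union>F\<in>set Fs. Pow F)"
  unfolding set_eq_iff mem_prefix_complex_iff by (metis PowD PowI UN_iff in_set_conv_nth)

lemma finite_prefix_complex: "j \<le> length Fs \<Longrightarrow> finite (prefix_complex j)"
  by (auto simp: prefix_complex_def intro: finite_facet)

lemma finite_nth: "j < length Fs \<Longrightarrow> finite (Fs ! j)"
  by (simp add: finite_facet)

lemma card_nth: "j < length Fs \<Longrightarrow> card (Fs ! j) = d"
  by (simp add: card_facet)

lemma nth_notin_set_take:
  assumes "j < length Fs"
  shows "Fs ! j \<notin> set (take j Fs)"
proof
  assume "Fs ! j \<in> set (take j Fs)"
  then obtain l where "l < j" "Fs ! l = Fs ! j" by (auto simp: in_set_conv_nth)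
  then show False using distinct_facets assms nth_eq_iff_index_eq by fastforce
qed

lemma restriction_subset: "restriction j \<subseteq> Fs ! j"
  by (auto simp: restriction_def)

lemma shelling_condition_prefix_complex:
  assumes "0 < j" "j < length Fs" "G \<in> facets (Pow (Fs ! j) \<inter> prefix_complex j)"
  shows "card G + 1 = d"
  using shelling_condition assms unfolding prefix_complex_def by blast

lemma restriction_notin_prefix_complex:
  assumes j: "j < length Fs"
  shows "restriction j \<notin> prefix_complex j"
proof
  assume R: "restriction j \<in> prefix_complex j"
  then have "0 < j" by (cases j) auto
  define X where "X = Pow (Fs ! j) \<inter> prefix_complex j"
  have "finite X" using finite_nth[OF j] by (simp add: X_def)
  moreover have "restriction j \<in> X" using R restriction_subset by (auto simp: X_def)
  ultimately obtain G where G: "G \<in> X" "restriction j \<subseteq> G" "\<forall>H\<in>X. G \<subseteq> H \<longrightarrow> G = H"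
    using finite_has_maximal2[of X "restriction j"] by blast
  then have "G \<in> facets X" by (auto simp: facets_def)
  then have "card G + 1 = d"
    using shelling_condition_prefix_complex[OF \<open>0 < j\<close> j] by (simp add: X_def)
  then have "G \<in> ridges (Fs ! j)"
    using G(1) mem_ridges_iff[OF finite_nth[OF j]] card_nth[OF j] by (simp add: X_def)
  then obtain u where u: "u \<in> Fs ! j" "G = Fs ! j - {u}" by (auto simp: ridges_def)
  then have "u \<in> restriction j" using G(1) by (simp add: restriction_def X_def)
  then show False using G(2) u by auto
qed

lemma restriction_subset_new_face:
  assumes "\<nu> \<subseteq> Fs ! j" "\<nu> \<notin> prefix_complex j"
  shows "restriction j \<subseteq> \<nu>"
proof
  fix v
  assume v: "v \<in> restriction j"
  show "v \<in> \<nu>"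
  proof (rule ccontr)
    assume "v \<notin> \<nu>"
    then have "\<nu> \<subseteq> Fs ! j - {v}" using assms(1) by auto
    then show False using v assms(2) prefix_complex_downward_closed by (auto simp: restriction_def)
  qed
qed

lemma ridge_in_prefix_complex_Suc:
  assumes "j < length Fs" "r \<in> prefix_complex (Suc j)" "card r + 1 = d"
  shows "r \<in> prefix_complex j \<or> (\<exists>u \<in> Fs ! j. r = Fs ! j - {u})"
  using assms mem_ridges_iff[OF finite_nth, of j r] card_nth[of j]
  by (auto simp: prefix_complex_Suc ridges_def)

text \<open>The face \<open>F\<^sub>j - {v, w}\<close> contains \<open>R(F\<^sub>j)\<close>, so it is new; hence the only ridges of the
  cycle containing it are among \<open>F\<^sub>j - {v}\<close> and \<open>F\<^sub>j - {w}\<close>, and parity forces both.\<close>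

lemma new_ridges_all_or_none:
  assumes j: "j < length Fs"
    and z: "z \<subseteq> prefix_complex (Suc j)" "\<forall>r\<in>z. card r + 1 = d" "mod2_cycle d z"
    and v: "v \<in> Fs ! j - restriction j" "Fs ! j - {v} \<in> z"
    and w: "w \<in> Fs ! j - restriction j"
  shows "Fs ! j - {w} \<in> z"
proof (rule ccontr)
  assume w_notin: "Fs ! j - {w} \<notin> z"
  define F where "F = Fs ! j"
  define t where "t = F - {v, w}"
  have "v \<noteq> w" using v(2) w_notin by auto
  then have "card {v, w} \<le> card F"
    using v w finite_nth[OF j] by (intro card_mono) (auto simp: F_def)
  then have "card t + 2 = d"
    using v w \<open>v \<noteq> w\<close> card_nth[OF j] finite_nth[OF j] by (auto simp: t_def F_def card_Diff_subset)
  then have even: "even (card {r\<in>z. t \<subseteq> r})"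
    using z(3) finite_nth[OF j] by (auto simp: mod2_cycle_def t_def F_def)
  have t_new: "t \<notin> prefix_complex j"
  proof
    assume "t \<in> prefix_complex j"
    moreover have "restriction j \<subseteq> t"
      using restriction_subset v w by (auto simp: t_def F_def)
    ultimately show False
      using restriction_notin_prefix_complex[OF j] prefix_complex_downward_closed by blast
  qed
  have "{r\<in>z. t \<subseteq> r} = {F - {v}}"
  proof
    show "{r\<in>z. t \<subseteq> r} \<subseteq> {F - {v}}"
    proof
      fix r
      assume r: "r \<in> {r\<in>z. t \<subseteq> r}"
      then have "r \<notin> prefix_complex j" using t_new prefix_complex_downward_closed by blast
      then obtain u where "u \<in> F" "r = F - {u}"
        using ridge_in_prefix_complex_Suc[OF j] r z(1,2) by (auto simp: F_def)
      then show "r \<in> {F - {v}}" using r w_notin by (auto simp: t_def F_def)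
    qed
  qed (use v in \<open>auto simp: t_def F_def\<close>)
  then show False using even by simp
qed

lemma mod2_cycle_prefix_complex_Suc:
  assumes j: "j < length Fs"
    and z: "z \<subseteq> prefix_complex (Suc j)" "\<forall>r\<in>z. card r + 1 = d" "mod2_cycle d z"
  shows "z \<subseteq> prefix_complex j \<or> sym_diff z (ridges (Fs ! j)) \<subseteq> prefix_complex j"
proof -
  define F where "F = Fs ! j"
  have old_or_ridge: "r \<in> prefix_complex j \<or> (\<exists>u \<in> F. r = F - {u})" if "r \<in> z" for r
    using ridge_in_prefix_complex_Suc[OF j] z(1,2) that unfolding F_def by blast
  have ridge_old: "F - {u} \<in> prefix_complex j" if "u \<in> restriction j" for u
    using that by (simp add: restriction_def F_def)
  show ?thesis
  proof (cases "\<exists>v \<in> F - restriction j. F - {v} \<in> z")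
    case False
    then show ?thesis using old_or_ridge ridge_old by blast
  next
    case True
    then have all_new: "F - {w} \<in> z" if "w \<in> F - restriction j" for w
      using new_ridges_all_or_none[OF j z] that unfolding F_def by blast
    have "r \<in> prefix_complex j" if r: "r \<in> sym_diff z (ridges F)" for r
    proof (cases "r \<in> z")
      case True
      then show ?thesis using r old_or_ridge[OF True] by (auto simp: ridges_def)
    next
      case False
      then obtain u where "u \<in> F" "r = F - {u}" using r by (auto simp: ridges_def)
      then show ?thesis using False all_new ridge_old by blast
    qed
    then show ?thesis by (auto simp: F_def)
  qed
qed

lemma mod2_cycle_is_boundary:
  assumes "j \<le> length Fs" "z \<subseteq> prefix_complex j" "\<forall>r\<in>z. card r + 1 = d" "mod2_cycle d z"
  shows "\<exists>c \<subseteq> set (take j Fs). mod2_boundary d c = z"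
  using assms
proof (induction j arbitrary: z)
  case 0
  then have "mod2_boundary d {} = z" by (simp add: mod2_boundary_def)
  then show ?case by blast
next
  case (Suc j)
  define F where "F = Fs ! j"
  have j: "j < length Fs" using Suc.prems(1) by simp
  have F: "finite F" "card F = d" using finite_nth[OF j] card_nth[OF j] by (simp_all add: F_def)
  have take_Suc: "set (take (Suc j) Fs) = insert F (set (take j Fs))"
    using j by (simp add: F_def take_Suc_conv_app_nth)
  consider "z \<subseteq> prefix_complex j" | "sym_diff z (ridges F) \<subseteq> prefix_complex j"
    using mod2_cycle_prefix_complex_Suc[OF j Suc.prems(2-4)] unfolding F_def by blast
  then show ?case
  proof cases
    case 1
    then obtain c where "c \<subseteq> set (take j Fs)" "mod2_boundary d c = z"
      using Suc.IH[of z] Suc.prems(1,3,4) by auto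
    then show ?thesis using take_Suc by blast
  next
    case 2
    define z' where "z' = sym_diff z (ridges F)"
    have "\<forall>r\<in>z'. card r + 1 = d"
      using Suc.prems(3) mem_ridges_iff[OF F(1)] F(2) by (auto simp: z'_def)
    moreover have "mod2_cycle d z'"
      unfolding z'_def
      using finite_subset[OF Suc.prems(2) finite_prefix_complex[OF Suc.prems(1)]]
      by (intro mod2_cycle_sym_diff finite_ridges mod2_cycle_ridges F Suc.prems(4))
    ultimately obtain c where c: "c \<subseteq> set (take j Fs)" "mod2_boundary d c = z'"
      using Suc.IH[of z'] 2 j unfolding z'_def by fastforce
    have "finite c" using c(1) finite_subset by blast
    moreover have "F \<notin> c" using c(1) nth_notin_set_take[OF j] by (auto simp: F_def)
    ultimately have "mod2_boundary d (insert F c) = sym_diff z' (ridges F)"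
      using mod2_boundary_insert[OF _ _ F] c(2) by simp
    also have "\<dots> = z" by (auto simp: z'_def)
    finally show ?thesis
      using c(1) take_Suc by (intro exI[of _ "insert F c"]) blast
  qed
qed

lemma homology_facet_closed_chain:
  assumes m: "m < length Fs" and homology: "restriction m = Fs ! m"
  shows "\<exists>c \<subseteq> set Fs. Fs ! m \<in> c \<and> mod2_boundary d c = {}"
proof -
  define F where "F = Fs ! m"
  have F: "finite F" "card F = d" using finite_nth[OF m] card_nth[OF m] by (simp_all add: F_def)
  have "ridges F \<subseteq> prefix_complex m"
    using homology by (auto simp: ridges_def restriction_def F_def)
  moreover have "\<forall>r\<in>ridges F. card r + 1 = d"
    using mem_ridges_iff[OF F(1)] F(2) by simp
  ultimately have "\<exists>c \<subseteq> set (take m Fs). mod2_boundary d c = ridges F"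
    using m by (intro mod2_cycle_is_boundary mod2_cycle_ridges F) simp_all
  then obtain c where c: "c \<subseteq> set (take m Fs)" "mod2_boundary d c = ridges F" by blast
  have "finite c" using c(1) finite_subset by blast
  moreover have "F \<notin> c" using c(1) nth_notin_set_take[OF m] by (auto simp: F_def)
  ultimately have "mod2_boundary d (insert F c) = sym_diff (ridges F) (ridges F)"
    using mod2_boundary_insert[OF _ _ F] c(2) by simp
  then have "mod2_boundary d (insert F c) = {}" by simp
  moreover have "insert F c \<subseteq> set Fs"
    using c(1) m set_take_subset[of m Fs] by (auto simp: F_def)
  ultimately show ?thesis by (intro exI[of _ "insert F c"]) (simp add: F_def)
qed

lemma free_pair_restriction:
  assumes j: "j < length Fs" and not_homology: "restriction j \<noteq> Fs ! j"
  shows "free_pair (prefix_complex (Suc j)) (restriction j) (Fs ! j)"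
proof -
  have maximal: "G = Fs ! j" if G: "G \<in> prefix_complex (Suc j)" "Fs ! j \<subseteq> G" for G
  proof -
    obtain l where l: "l < Suc j" "G \<subseteq> Fs ! l" using G(1) mem_prefix_complex_iff by blast
    have l_less: "l < length Fs" using l(1) j by simp
    have "Fs ! j \<subseteq> Fs ! l" using G(2) l(2) by blast
    then have "Fs ! j = Fs ! l"
      by (rule card_subset_eq[OF finite_nth[OF l_less]]) (simp add: card_nth j l_less)
    then show ?thesis using G(2) l(2) by blast
  qed
  have F_in: "Fs ! j \<in> prefix_complex (Suc j)" by (simp add: prefix_complex_Suc)
  then have "Fs ! j \<in> facets (prefix_complex (Suc j))"
    unfolding facets_def using maximal by blast
  moreover have "\<tau> = Fs ! j" if \<tau>: "\<tau> \<in> facets (prefix_complex (Suc j))" "restriction j \<subseteq> \<tau>" for \<tau>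
  proof -
    have "\<tau> \<notin> prefix_complex j"
      using \<tau>(2) restriction_notin_prefix_complex[OF j] prefix_complex_downward_closed by blast
    moreover have "\<tau> \<in> prefix_complex (Suc j)" using \<tau>(1) by (simp add: facets_def)
    ultimately have "\<tau> \<subseteq> Fs ! j" by (simp add: prefix_complex_Suc)
    then show ?thesis using \<tau>(1) F_in unfolding facets_def by blast
  qed
  ultimately show ?thesis
    using restriction_subset[of j] not_homology unfolding free_pair_def psubset_eq by blast
qed

lemma collapse_restriction:
  assumes j: "j < length Fs"
  shows "collapse (prefix_complex (Suc j)) (restriction j) = prefix_complex j"
  using restriction_subset_new_face[of _ j] restriction_notin_prefix_complex[OF j]
    prefix_complex_downward_closed
  by (auto simp: collapse_def prefix_complex_Suc)

lemma collapsible_prefix_complex: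
  assumes "\<forall>j < length Fs. restriction j \<noteq> Fs ! j" "j \<le> length Fs"
  shows "collapsible (prefix_complex j)"
  using assms(2)
proof (induction j)
  case 0
  then show ?case by (simp add: collapsible.void)
next
  case (Suc j)
  then have "j < length Fs" by simp
  with assms(1) Suc show ?case
    using collapsible.step[OF free_pair_restriction] collapse_restriction by simp
qed

lemma collapsible_or_closed_chain:
  "collapsible (prefix_complex (length Fs)) \<or> (\<exists>c \<subseteq> set Fs. c \<noteq> {} \<and> mod2_boundary d c = {})"
proof (cases "\<exists>m < length Fs. restriction m = Fs ! m")
  case True
  then obtain m where "m < length Fs" "restriction m = Fs ! m" by blast
  from homology_facet_closed_chain[OF this] show ?thesis by blast
next
  case False
  then show ?thesis using collapsible_prefix_complex[of "length Fs"] by simp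
qed

end

lemma shellable_imp_pure_shelling:
  assumes "shellable \<Delta>"
  obtains d Fs where "pure_shelling Fs d" "set Fs = facets \<Delta>"
  using assms unfolding shellable_def pure_shelling_def by metis

subsection \<open>The polar complex\<close>

lemma Inl_in_polar_facet_iff [simp]: "Inl i \<in> polar_facet n \<sigma> \<longleftrightarrow> i \<in> \<sigma>"
  by (auto simp: polar_facet_def)

lemma Inr_in_polar_facet_iff [simp]: "Inr i \<in> polar_facet n \<sigma> \<longleftrightarrow> i \<in> {1..n} \<and> i \<notin> \<sigma>"
  by (auto simp: polar_facet_def)

lemma polar_facet_inject: "polar_facet n \<sigma> = polar_facet n \<tau> \<longleftrightarrow> \<sigma> = \<tau>"
  by (metis Inl_in_polar_facet_iff subsetI subset_antisym)

lemma finite_polar_facet: "\<sigma> \<subseteq> {1..n} \<Longrightarrow> finite (polar_facet n \<sigma>)"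
  by (auto simp: polar_facet_def intro: finite_subset)

lemma card_polar_facet:
  assumes "\<sigma> \<subseteq> {1..n}"
  shows "card (polar_facet n \<sigma>) = n"
proof -
  have "finite \<sigma>" using assms finite_subset by blast
  then have "card (polar_facet n \<sigma>) = card \<sigma> + card ({1..n} - \<sigma>)"
    unfolding polar_facet_def by (subst card_Un_disjoint) (auto simp: card_image)
  also have "\<dots> = n"
    using assms card_mono[OF _ assms] by (simp add: card_Diff_subset \<open>finite \<sigma>\<close>)
  finally show ?thesis .
qed

lemma polar_facet_subset_imp_eq:
  assumes "\<sigma> \<subseteq> {1..n}" "\<tau> \<subseteq> {1..n}" "polar_facet n \<sigma> \<subseteq> polar_facet n \<tau>"
  shows "\<sigma> = \<tau>"
  using assms card_subset_eq finite_polar_facet card_polar_facet polar_facet_inject by metis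

lemma facets_polar_complex:
  assumes "C \<subseteq> Pow {1..n}"
  shows "facets (polar_complex n C) = polar_facet n ` C"
proof (rule set_eqI)
  fix F
  show "F \<in> facets (polar_complex n C) \<longleftrightarrow> F \<in> polar_facet n ` C"
  proof
    assume F: "F \<in> facets (polar_complex n C)"
    then obtain \<sigma> where "\<sigma> \<in> C" "F \<subseteq> polar_facet n \<sigma>"
      by (auto simp: facets_def polar_complex_def)
    moreover from this have "polar_facet n \<sigma> = F"
      using F by (auto simp: facets_def polar_complex_def)
    ultimately show "F \<in> polar_facet n ` C" by auto
  next
    assume "F \<in> polar_facet n ` C"
    then obtain \<sigma> where \<sigma>: "\<sigma> \<in> C" "F = polar_facet n \<sigma>" by blast
    have "G = F" if G: "G \<in> polar_complex n C" "F \<subseteq> G" for G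
    proof -
      obtain \<tau> where \<tau>: "\<tau> \<in> C" "G \<subseteq> polar_facet n \<tau>"
        using G(1) unfolding polar_complex_def by blast
      have "\<sigma> = \<tau>"
        using polar_facet_subset_imp_eq[of \<sigma> n \<tau>] \<sigma> \<tau> G(2) assms by blast
      then show ?thesis using \<sigma>(2) \<tau>(2) G(2) by blast
    qed
    moreover have "F \<in> polar_complex n C" using \<sigma> by (auto simp: polar_complex_def)
    ultimately show "F \<in> facets (polar_complex n C)" by (simp add: facets_def)
  qed
qed

definition polar_vertex :: "nat set \<Rightarrow> nat \<Rightarrow> nat + nat" where
  "polar_vertex \<sigma> k = (if k \<in> \<sigma> then Inl k else Inr k)"

lemma polar_facets_containing_ridge:
  assumes "\<tau> \<subseteq> {1..n}" "polar_facet n \<sigma> - {polar_vertex \<sigma> k} \<subseteq> polar_facet n \<tau>"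
  shows "\<tau> = \<sigma> \<or> \<tau> = sym_diff \<sigma> {k}"
proof -
  have agree: "i \<in> \<tau> \<longleftrightarrow> i \<in> \<sigma>" if "i \<noteq> k" for i
  proof
    assume "i \<in> \<tau>"
    show "i \<in> \<sigma>"
    proof (rule ccontr)
      assume "i \<notin> \<sigma>"
      then have "Inr i \<in> polar_facet n \<sigma> - {polar_vertex \<sigma> k}"
        using \<open>i \<in> \<tau>\<close> assms(1) that by (auto simp: polar_vertex_def)
      then have "Inr i \<in> polar_facet n \<tau>" using assms(2) by blast
      then show False using \<open>i \<in> \<tau>\<close> by simp
    qed
  next
    assume "i \<in> \<sigma>"
    then have "Inl i \<in> polar_facet n \<sigma> - {polar_vertex \<sigma> k}"
      using that by (simp add: polar_vertex_def)
    then have "Inl i \<in> polar_facet n \<tau>" using assms(2) by blast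
    then show "i \<in> \<tau>" by simp
  qed
  show ?thesis
  proof (cases "k \<in> \<tau> \<longleftrightarrow> k \<in> \<sigma>")
    case True
    then have "i \<in> \<tau> \<longleftrightarrow> i \<in> \<sigma>" for i using agree by (cases "i = k") auto
    then show ?thesis by blast
  next
    case False
    then have "i \<in> \<tau> \<longleftrightarrow> i \<in> sym_diff \<sigma> {k}" for i using agree by (cases "i = k") auto
    then show ?thesis by blast
  qed
qed

lemma closed_polar_chain_flip:
  assumes c: "c \<subseteq> polar_facet n ` Pow {1..n}" "mod2_boundary n c = {}"
    and \<sigma>: "\<sigma> \<subseteq> {1..n}" "polar_facet n \<sigma> \<in> c" and k: "k \<in> {1..n}"
  shows "polar_facet n (sym_diff \<sigma> {k}) \<in> c"
proof -
  define r where "r = polar_facet n \<sigma> - {polar_vertex \<sigma> k}"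
  have "polar_vertex \<sigma> k \<in> polar_facet n \<sigma>" using k by (simp add: polar_vertex_def)
  then have "card (polar_facet n \<sigma>) = Suc (card r)"
    unfolding r_def using finite_polar_facet[OF \<sigma>(1)] by (rule card.remove[rotated])
  then have "finite r" "card r + 1 = n"
    using finite_polar_facet[OF \<sigma>(1)] card_polar_facet[OF \<sigma>(1)] by (simp_all add: r_def)
  then have "even (card {G\<in>c. r \<subseteq> G})" using c(2) by (auto simp: mod2_boundary_def)
  then have "{G\<in>c. r \<subseteq> G} \<noteq> {polar_facet n \<sigma>}" by auto
  moreover have "polar_facet n \<sigma> \<in> {G\<in>c. r \<subseteq> G}" using \<sigma>(2) by (auto simp: r_def)
  ultimately obtain G where G: "G \<in> c" "r \<subseteq> G" "G \<noteq> polar_facet n \<sigma>" by blast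
  then obtain \<tau> where \<tau>: "\<tau> \<subseteq> {1..n}" "G = polar_facet n \<tau>" using c(1) by blast
  then have "\<tau> = \<sigma> \<or> \<tau> = sym_diff \<sigma> {k}"
    using polar_facets_containing_ridge G(2) by (simp add: r_def)
  then show ?thesis using G(1,3) \<tau>(2) by blast
qed

lemma closed_polar_chain_full:
  assumes c: "c \<subseteq> polar_facet n ` Pow {1..n}" "mod2_boundary n c = {}"
    and \<sigma>: "\<sigma> \<subseteq> {1..n}" "polar_facet n \<sigma> \<in> c" and \<tau>: "\<tau> \<subseteq> {1..n}"
  shows "polar_facet n \<tau> \<in> c"
proof -
  have "polar_facet n \<tau> \<in> c"
    if "\<sigma> \<subseteq> {1..n}" "polar_facet n \<sigma> \<in> c" "card (sym_diff \<sigma> \<tau>) = m" for \<sigma> m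
    using that
  proof (induction m arbitrary: \<sigma>)
    case 0
    have "finite (sym_diff \<sigma> \<tau>)" using 0(1) \<tau> by (simp add: finite_subset)
    then have "\<sigma> = \<tau>" using 0(3) by auto
    then show ?case using 0(2) by simp
  next
    case (Suc m)
    then obtain k where k: "k \<in> sym_diff \<sigma> \<tau>" by (metis card.empty ex_in_conv nat.distinct(1))
    then have "k \<in> {1..n}" using Suc.prems(1) \<tau> by blast
    have "sym_diff (sym_diff \<sigma> {k}) \<tau> = sym_diff \<sigma> \<tau> - {k}" using k by auto
    then have "card (sym_diff (sym_diff \<sigma> {k}) \<tau>) = m" using Suc.prems(3) k by simp
    moreover have "polar_facet n (sym_diff \<sigma> {k}) \<in> c"
      using closed_polar_chain_flip[OF c Suc.prems(1,2) \<open>k \<in> {1..n}\<close>] .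
    moreover have "sym_diff \<sigma> {k} \<subseteq> {1..n}" using Suc.prems(1) \<open>k \<in> {1..n}\<close> by blast
    ultimately show ?case using Suc.IH by blast
  qed
  then show ?thesis using \<sigma> by blast
qed

lemma closed_polar_chain_imp_full:
  assumes C: "C \<subseteq> Pow {1..n}"
    and c: "c \<subseteq> polar_facet n ` C" "c \<noteq> {}" "mod2_boundary n c = {}"
  shows "C = Pow {1..n}"
proof -
  obtain \<sigma> where \<sigma>: "\<sigma> \<in> C" "polar_facet n \<sigma> \<in> c"
    using c(1,2) by (metis ex_in_conv image_iff subsetD)
  have c_polar: "c \<subseteq> polar_facet n ` Pow {1..n}" using c(1) C by blast
  have "\<tau> \<in> C" if "\<tau> \<subseteq> {1..n}" for \<tau>
  proof -
    have "polar_facet n \<tau> \<in> c"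
      using closed_polar_chain_full[OF c_polar c(3) _ \<sigma>(2) that] \<sigma>(1) C by blast
    then show ?thesis using c(1) polar_facet_inject by auto
  qed
  then show ?thesis using C by blast
qed

theorem lemma7p5:
  fixes n :: nat and C :: "nat set set"
  assumes "C \<subseteq> Pow {1..n}"
    and "shellable (polar_complex n C)"
  shows "C = Pow {1..n} \<or> collapsible (polar_complex n C)"
proof -
  obtain d Fs where shelling: "pure_shelling Fs d" and Fs_facets: "set Fs = facets (polar_complex n C)"
    by (rule shellable_imp_pure_shelling[OF assms(2)])
  interpret pure_shelling Fs d by (fact shelling)
  have Fs: "set Fs = polar_facet n ` C"
    using Fs_facets facets_polar_complex[OF assms(1)] by simp
  have "polar_complex n C = prefix_complex (length Fs)"
    unfolding prefix_complex_length Fs by (auto simp: polar_complex_def)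
  moreover have "C = Pow {1..n}" if c: "c \<subseteq> set Fs" "c \<noteq> {}" "mod2_boundary d c = {}" for c
  proof -
    obtain F where F: "F \<in> c" using c(2) by blast
    then have "card F = d" using c(1) card_facet by blast
    moreover obtain \<sigma> where "\<sigma> \<in> C" "F = polar_facet n \<sigma>" using F c(1) Fs by blast
    then have "card F = n" using assms(1) card_polar_facet by blast
    ultimately show ?thesis using closed_polar_chain_imp_full[OF assms(1)] c Fs by simp
  qed
  ultimately show ?thesis using collapsible_or_closed_chain by metis
qed

end
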